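(* There do not exist real numbers $a,b,c$ with $a\neq 0$ such that the quadratic function $f(x)=ax^2+bx+c$ has two distinct fixed points $p_1,p_2\in\mathbb{R}$ with the property that for each $i\in\{1,2\}$ there is $\epsilon_i>0$ such that for every $x^{(0)}$ with $|x^{(0)}-p_i|\le\epsilon_i$, the fixed-point iteration $x^{(t)}=f(x^{(t-1)})$, $t\ge1$, converges to $p_i$.
   Context: A fixed point of $f$ is a point $p$ with $f(p)=p$. *)

theory Defs
  imports Complex_Main
begin

end

theory Submission
  imports Defs
begin

text \<open>For distinct fixed points \<open>p\<^sub>1, p\<^sub>2\<close> of \<open>f x = a x\<^sup>2 + b x + c\<close> the
  derivatives satisfy \<open>f'(p\<^sub>1) + f'(p\<^sub>2) = 2\<close>, so one of them, say \<open>p\<close>, has \<open>f'(p) \<ge> 1\<close>.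
  Writing \<open>u = a (x - p)\<close>, one step of the iteration maps \<open>u\<close> to \<open>u (u + f'(p)) \<ge> u\<close>
  whenever \<open>u > 0\<close>; hence iterates started arbitrarily close to \<open>p\<close> on the side
  \<open>sgn a\<close> keep \<open>a (x - p)\<close> bounded away from \<open>0\<close> and cannot converge to \<open>p\<close>.\<close>

lemma quadratic_sub_fixed_point:
  fixes a b c p x :: real
  assumes "a * p^2 + b * p + c = p"
  shows "a * x^2 + b * x + c - p = (x - p) * (a * (x - p) + (2 * a * p + b))"
  using assms by (simp add: algebra_simps power2_eq_square)

lemma quadratic_fixed_points_derivative_sum:
  fixes a b c p1 p2 :: real
  assumes "p1 \<noteq> p2" and "a * p1^2 + b * p1 + c = p1" and "a * p2^2 + b * p2 + c = p2"
  shows "(2 * a * p1 + b) + (2 * a * p2 + b) = 2"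
proof -
  have "(p1 - p2) * (a * p1 + a * p2 + b - 1) = 0"
    using assms(2,3) by (simp add: algebra_simps power2_eq_square)
  with assms(1) have "a * p1 + a * p2 + b = 1" by simp
  then show ?thesis by simp
qed

lemma quadratic_repelling_step:
  fixes a b c p x :: real
  assumes fp: "a * p^2 + b * p + c = p" and d: "2 * a * p + b \<ge> 1" and u: "a * (x - p) > 0"
  shows "a * (a * x^2 + b * x + c - p) \<ge> a * (x - p)"
proof -
  have "a * (a * x^2 + b * x + c - p) = a * (x - p) * (a * (x - p) + (2 * a * p + b))"
    using quadratic_sub_fixed_point[OF fp, of x] by (simp add: mult.assoc)
  also have "\<dots> \<ge> a * (x - p) * 1"
    using u d by (intro mult_left_mono) auto
  finally show ?thesis by simp
qed

lemma quadratic_repelling_iterates: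
  fixes a b c p x :: real and f :: "real \<Rightarrow> real"
  assumes f: "f = (\<lambda>x. a * x^2 + b * x + c)"
    and fp: "a * p^2 + b * p + c = p" and d: "2 * a * p + b \<ge> 1" and u: "a * (x - p) > 0"
  shows "a * ((f ^^ t) x - p) \<ge> a * (x - p)"
proof (induction t)
  case 0
  show ?case by simp
next
  case (Suc t)
  with u have "a * ((f ^^ t) x - p) > 0" by linarith
  from quadratic_repelling_step[OF fp d this] Suc show ?case
    by (simp add: f)
qed

lemma quadratic_repelling_not_tendsto:
  fixes a b c p x :: real and f :: "real \<Rightarrow> real"
  assumes f: "f = (\<lambda>x. a * x^2 + b * x + c)"
    and fp: "a * p^2 + b * p + c = p" and d: "2 * a * p + b \<ge> 1" and u: "a * (x - p) > 0"
  shows "\<not> (\<lambda>t. (f ^^ t) x) \<longlonglongrightarrow> p"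
proof
  assume "(\<lambda>t. (f ^^ t) x) \<longlonglongrightarrow> p"
  then have "(\<lambda>t. a * ((f ^^ t) x - p)) \<longlonglongrightarrow> a * (p - p)"
    by (intro tendsto_intros)
  then have "a * (x - p) \<le> a * (p - p)"
    by (rule LIMSEQ_le_const) (use quadratic_repelling_iterates[OF f fp d u] in auto)
  with u show False by simp
qed

theorem lemmaA8:
  shows "\<not> (\<exists>a b c :: real. a \<noteq> 0 \<and>
           (let f = (\<lambda>x. a * x^2 + b * x + c) in
             (\<exists>p1 p2 :: real. p1 \<noteq> p2 \<and> f p1 = p1 \<and> f p2 = p2 \<and>
               (\<forall>p \<in> {p1, p2}. \<exists>\<epsilon> > 0. \<forall>x0. \<bar>x0 - p\<bar> \<le> \<epsilon> \<longrightarrow>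
                   (\<lambda>t. (f ^^ t) x0) \<longlonglongrightarrow> p))))"
proof
  assume "\<exists>a b c :: real. a \<noteq> 0 \<and>
           (let f = (\<lambda>x. a * x^2 + b * x + c) in
             (\<exists>p1 p2 :: real. p1 \<noteq> p2 \<and> f p1 = p1 \<and> f p2 = p2 \<and>
               (\<forall>p \<in> {p1, p2}. \<exists>\<epsilon> > 0. \<forall>x0. \<bar>x0 - p\<bar> \<le> \<epsilon> \<longrightarrow>
                   (\<lambda>t. (f ^^ t) x0) \<longlonglongrightarrow> p)))"
  then obtain a b c p1 p2 :: real and f :: "real \<Rightarrow> real"
    where f: "f = (\<lambda>x. a * x^2 + b * x + c)" and a: "a \<noteq> 0" and "p1 \<noteq> p2"
      and fp1: "a * p1^2 + b * p1 + c = p1" and fp2: "a * p2^2 + b * p2 + c = p2"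
      and attracting: "\<forall>p \<in> {p1, p2}. \<exists>\<epsilon> > 0. \<forall>x0. \<bar>x0 - p\<bar> \<le> \<epsilon> \<longrightarrow>
                         (\<lambda>t. (f ^^ t) x0) \<longlonglongrightarrow> p"
    unfolding Let_def by blast
  have "2 * a * p1 + b \<ge> 1 \<or> 2 * a * p2 + b \<ge> 1"
    using quadratic_fixed_points_derivative_sum[OF \<open>p1 \<noteq> p2\<close> fp1 fp2] by linarith
  then obtain p where "p \<in> {p1, p2}" and d: "2 * a * p + b \<ge> 1" by blast
  with fp1 fp2 have fp: "a * p^2 + b * p + c = p" by auto
  from attracting \<open>p \<in> {p1, p2}\<close> obtain \<epsilon> :: real where "\<epsilon> > 0"
    and converges: "\<forall>x0. \<bar>x0 - p\<bar> \<le> \<epsilon> \<longrightarrow> (\<lambda>t. (f ^^ t) x0) \<longlonglongrightarrow> p" by blast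
  define x0 where "x0 = p + \<epsilon> * sgn a"
  have "\<bar>x0 - p\<bar> \<le> \<epsilon>"
    using \<open>\<epsilon> > 0\<close> a by (simp add: x0_def abs_mult abs_sgn_eq)
  moreover have "a * (x0 - p) > 0"
    using \<open>\<epsilon> > 0\<close> a by (simp add: x0_def mult.left_commute abs_sgn[symmetric])
  ultimately show False
    using converges quadratic_repelling_not_tendsto[OF _ fp d] by (auto simp: f)
qed

end
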